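(* Let $d$ be an odd prime, $1\le r\le d$, and let $A\in\mathbb{R}^{rd\times rd}$ be the matrix defined in the context. Let $b,\bar b\in\{0,1\}^{rd}$ be independent and uniformly random, written in blocks $b=(b^{(0)},\dots,b^{(r-1)})$ with $b^{(j)}\in\{0,1\}^d$ (similarly $\bar b$), and define $\delta\in\{-2,0,2\}^{rd}$ by $\delta^{(j)}_k=(-1)^{b^{(j)}_k}-(-1)^{\bar b^{(j)}_k}$. Then $\mathbb{E}[\delta^TA\delta]=2d^2r$, and there exist absolute constants $c,C>0$ such that $$\Pr\Big[\delta^TA\delta\le\frac{d^2r}2\Big]\le Ce^{-crd}.$$
   Context: With $\omega_d=e^{2\pi i/d}$ and $j,k,\ell\in[d]=\{0,\dots,d-1\}$, let $\ket{\varphi^{(j)}_k}=\frac1{\sqrt d}\sum_{\ell}\omega_d^{-k\ell+j\ell^2+k^2}\ket\ell$, $\alpha^{(j,j')}_{k,k'}=\langle\varphi^{(j)}_k|\varphi^{(j')}_{k'}\rangle$, $S^{(j,j')}=\sum_{k,k'}\alpha^{(j,j')}_{k,k'}$, and let $A$ have blocks indexed by $j,j'\in[r]$ with entries $A^{(j,j')}_{k,k'}=\mathrm{Re}\big[\alpha^{(j,j')}_{k,k'}\overline{S^{(j,j')}}\big]$; $\delta^TA\delta=\sum_{j,j',k,k'}\delta^{(j)}_kA^{(j,j')}_{k,k'}\delta^{(j')}_{k'}$. *)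

theory Defs
  imports "HOL-Probability.Probability"
begin

definition omega_pow :: "nat \<Rightarrow> int \<Rightarrow> complex" where
  "omega_pow d n = cis (2 * pi * of_int n / real d)"

text \<open>phi^{(j)}_k evaluated at basis index l.\<close>
definition phi :: "nat \<Rightarrow> nat \<Rightarrow> nat \<Rightarrow> nat \<Rightarrow> complex" where
  "phi d j k l = complex_of_real (1 / sqrt (real d)) *
     omega_pow d (- int k * int l + int j * int l ^ 2 + int k ^ 2)"

definition alpha :: "nat \<Rightarrow> nat \<Rightarrow> nat \<Rightarrow> nat \<Rightarrow> nat \<Rightarrow> complex" where
  "alpha d j j' k k' = (\<Sum>l<d. cnj (phi d j k l) * phi d j' k' l)"

definition S_sum :: "nat \<Rightarrow> nat \<Rightarrow> nat \<Rightarrow> complex" where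
  "S_sum d j j' = (\<Sum>k<d. \<Sum>k'<d. alpha d j j' k k')"

definition A_entry :: "nat \<Rightarrow> nat \<Rightarrow> nat \<Rightarrow> nat \<Rightarrow> nat \<Rightarrow> real" where
  "A_entry d j j' k k' = Re (alpha d j j' k k' * cnj (S_sum d j j'))"

text \<open>delta^T A delta, with delta indexed by (block j, position k).\<close>
definition quad_form :: "nat \<Rightarrow> nat \<Rightarrow> (nat \<times> nat \<Rightarrow> real) \<Rightarrow> real" where
  "quad_form d r \<delta> = (\<Sum>j<r. \<Sum>j'<r. \<Sum>k<d. \<Sum>k'<d.
      \<delta> (j, k) * A_entry d j j' k k' * \<delta> (j', k'))"

text \<open>Bit strings b in {0,1}^{rd}, indexed by (j,k), j<r, k<d (True = 1).\<close>
definition bitstrings :: "nat \<Rightarrow> nat \<Rightarrow> (nat \<times> nat \<Rightarrow> bool) set" where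
  "bitstrings r d = ({..<r} \<times> {..<d}) \<rightarrow>\<^sub>E (UNIV :: bool set)"

definition sgn_bit :: "bool \<Rightarrow> real" where
  "sgn_bit b = (if b then -1 else 1)"

definition delta_of :: "(nat \<times> nat \<Rightarrow> bool) \<Rightarrow> (nat \<times> nat \<Rightarrow> bool) \<Rightarrow> nat \<times> nat \<Rightarrow> real" where
  "delta_of b b' jk = sgn_bit (b jk) - sgn_bit (b' jk)"

definition bit_pairs :: "nat \<Rightarrow> nat \<Rightarrow> ((nat \<times> nat \<Rightarrow> bool) \<times> (nat \<times> nat \<Rightarrow> bool)) pmf" where
  "bit_pairs r d = pmf_of_set (bitstrings r d \<times> bitstrings r d)"

end

theory Submission
  imports Defs
begin

text \<open>
  Each block \<open>(\<phi>\<^sup>(\<^sup>j\<^sup>)\<^sub>k)\<^sub>k\<close> is an orthonormal basis, so the diagonal of \<open>A\<close> is constantly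
  \<open>d\<close>; as the coordinates of \<open>\<delta>\<close> are independent with mean \<open>0\<close> and second moment \<open>2\<close>,
  the expectation is \<open>d \<cdot> 2rd\<close>.

  With \<open>v\<^sub>j = \<Sum>\<^sub>k \<phi>\<^sup>(\<^sup>j\<^sup>)\<^sub>k\<close> one has \<open>S\<^sup>(\<^sup>j\<^sup>,\<^sup>j\<^sup>'\<^sup>) = \<langle>v\<^sub>j, v\<^sub>j\<^sub>'\<rangle>\<close>, so \<open>A = Re (W\<^sup>* W)\<close> where \<open>W\<close> has
  the columns \<open>\<phi>\<^sup>(\<^sup>j\<^sup>)\<^sub>k \<otimes> conj v\<^sub>j\<close>. Up to a Gauss sum of modulus \<open>\<surd>d\<close>, \<open>v\<^sub>j\<close> is the chirp
  \<open>m \<mapsto> \<omega>\<^sup>j\<^sup>m\<^sup>2\<close>, and for an odd prime \<open>d\<close> the chirp transform has norm at most \<open>\<surd>(2d)\<close>;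
  hence \<open>\<parallel>A\<parallel> \<le> \<parallel>W\<parallel>\<^sup>2 \<le> 2d\<close>.

  For the tail, \<open>\<delta>\<^sup>TA\<delta> = d|\<delta>|\<^sup>2 + Q\<close> with \<open>Q\<close> the off-diagonal part. A Chernoff bound makes
  \<open>|\<delta>|\<^sup>2 \<le> rd\<close> exponentially unlikely. For \<open>Q\<close>, averaging over a random cut \<open>T\<close> of the index
  set and Jensen's inequality reduce its moment generating function to those of the decoupled
  forms \<open>\<Sum>\<^sub>i\<^sub>\<in>\<^sub>T \<delta>\<^sub>i (A\<delta>')\<^sub>i\<close>, \<open>\<delta>'\<close> the restriction of \<open>\<delta>\<close> to the complement of \<open>T\<close>. These
  are linear in the independent coordinates in \<open>T\<close>, with coefficient vectors of norm at most
  \<open>2d|\<delta>'| \<le> 4d\<surd>(rd)\<close>. The bound \<open>cosh y \<le> exp (y\<^sup>2/2)\<close> then gives a Hoeffding-type estimate.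
\<close>

section \<open>Roots of unity\<close>

lemma omega_pow_add: "omega_pow d (a + b) = omega_pow d a * omega_pow d b"
  unfolding omega_pow_def cis_mult by (simp add: add_divide_distrib distrib_left)

lemma cnj_omega_pow: "cnj (omega_pow d a) = omega_pow d (- a)"
  unfolding omega_pow_def cis_cnj by simp

lemma omega_pow_0 [simp]: "omega_pow d 0 = 1"
  unfolding omega_pow_def by simp

lemma omega_pow_eq_1:
  assumes "d > 0" "int d dvd a"
  shows "omega_pow d a = 1"
proof -
  obtain q where q: "a = int d * q" using assms(2) by blast
  have "2 * pi * of_int a / real d = 2 * pi * of_int q" using assms(1) q by simp
  thus ?thesis unfolding omega_pow_def by simp
qed

lemma omega_pow_cong:
  assumes "d > 0" "int d dvd (a - b)"
  shows "omega_pow d a = omega_pow d b"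
proof -
  have "omega_pow d a = omega_pow d (a - b) * omega_pow d b" by (simp flip: omega_pow_add)
  thus ?thesis using omega_pow_eq_1[OF assms] by simp
qed

lemma omega_pow_neq_1:
  assumes "d > 0" "\<not> int d dvd a"
  shows "omega_pow d a \<noteq> 1"
proof
  assume "omega_pow d a = 1"
  hence "exp (\<i> * complex_of_real (2 * pi * of_int a / real d)) = 1"
    unfolding omega_pow_def cis_conv_exp by simp
  then obtain n :: int where "2 * pi * of_int a / real d = of_int (2 * n) * pi"
    unfolding exp_eq_1 by auto
  hence "of_int a = real d * of_int n" using assms(1) pi_gt_zero by (simp add: field_simps)
  hence "a = int d * n" by (metis of_int_eq_iff of_int_mult of_int_of_nat_eq)
  thus False using assms(2) by simp
qed

lemma omega_pow_power: "omega_pow d a ^ n = omega_pow d (a * int n)"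
  unfolding omega_pow_def Complex.DeMoivre by (simp add: field_simps)

lemma sum_omega_pow_mult:
  assumes "d > 0"
  shows "(\<Sum>l<d. omega_pow d (a * int l)) = (if int d dvd a then of_nat d else 0)"
proof (cases "int d dvd a")
  case True
  thus ?thesis using assms omega_pow_eq_1 by simp
next
  case False
  have z: "omega_pow d a \<noteq> 1" using omega_pow_neq_1[OF assms False] .
  have "(\<Sum>l<d. omega_pow d (a * int l)) = (\<Sum>l<d. omega_pow d a ^ l)"
    by (simp add: omega_pow_power)
  also have "\<dots> = (omega_pow d a ^ d - 1) / (omega_pow d a - 1)" using geometric_sum[OF z] .
  also have "omega_pow d a ^ d = 1" unfolding omega_pow_power using omega_pow_eq_1[OF assms] by simp
  finally show ?thesis using False by simp
qed

lemma eq_of_int_dvd_diff: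
  assumes "k < d" "k' < d" "int d dvd (int k - int k')"
  shows "k = k'"
proof -
  obtain q where q: "int k - int k' = int d * q" using assms(3) by blast
  have "q = 0"
  proof (rule ccontr)
    assume "q \<noteq> 0"
    hence "int d * 1 \<le> int d * \<bar>q\<bar>" by (intro mult_left_mono) auto
    hence "\<bar>int d * q\<bar> \<ge> int d" by (simp add: abs_mult)
    thus False using q assms(1,2) by linarith
  qed
  thus ?thesis using q by simp
qed

section \<open>Orthonormality of the blocks\<close>

definition phase :: "nat \<Rightarrow> nat \<Rightarrow> nat \<Rightarrow> int" where
  "phase j k l = - int k * int l + int j * int l ^ 2 + int k ^ 2"

lemma phi_eq_phase: "phi d j k l = complex_of_real (1 / sqrt (real d)) * omega_pow d (phase j k l)"
  unfolding phi_def phase_def ..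

lemma cnj_phi_mult_phi:
  assumes "d > 0"
  shows "cnj (phi d j k l) * phi d j' k' l' = (1 / of_nat d) * omega_pow d (phase j' k' l' - phase j k l)"
proof -
  have "complex_of_real (1 / sqrt (real d)) * complex_of_real (1 / sqrt (real d)) = 1 / of_nat d"
    using assms by (simp flip: of_real_mult add: real_sqrt_mult[symmetric])
  thus ?thesis
    unfolding phi_eq_phase by (simp add: cnj_omega_pow mult_ac flip: omega_pow_add)
qed

lemma alpha_same_block:
  assumes "d > 0" "k < d" "k' < d"
  shows "alpha d j j k k' = (if k = k' then 1 else 0)"
proof -
  have "alpha d j j k k' = (\<Sum>l<d. (1 / of_nat d) *
      (omega_pow d (int k' ^ 2 - int k ^ 2) * omega_pow d ((int k - int k') * int l)))"
    unfolding alpha_def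
    by (intro sum.cong refl, unfold cnj_phi_mult_phi[OF assms(1)] omega_pow_add[symmetric],
        rule arg_cong[where f = "\<lambda>x. _ * omega_pow d x"],
        simp add: phase_def algebra_simps power2_eq_square)
  also have "\<dots> = (1 / of_nat d) * omega_pow d (int k' ^ 2 - int k ^ 2) *
      (\<Sum>l<d. omega_pow d ((int k - int k') * int l))"
    by (simp add: sum_distrib_left mult.assoc)
  also have "\<dots> = (if k = k' then 1 else 0)"
    unfolding sum_omega_pow_mult[OF assms(1)] using eq_of_int_dvd_diff[OF assms(2,3)] assms(1) by auto
  finally show ?thesis .
qed

lemma phi_columns_orthonormal:
  assumes "d > 0" "l < d" "l' < d"
  shows "(\<Sum>k<d. cnj (phi d j k l') * phi d j k l) = (if l = l' then 1 else 0)"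
proof -
  have "(\<Sum>k<d. cnj (phi d j k l') * phi d j k l) = (\<Sum>k<d. (1 / of_nat d) *
      (omega_pow d (int j * int l ^ 2 - int j * int l' ^ 2) * omega_pow d ((int l' - int l) * int k)))"
    by (intro sum.cong refl, unfold cnj_phi_mult_phi[OF assms(1)] omega_pow_add[symmetric],
        rule arg_cong[where f = "\<lambda>x. _ * omega_pow d x"],
        simp add: phase_def algebra_simps power2_eq_square)
  also have "\<dots> = (1 / of_nat d) * omega_pow d (int j * int l ^ 2 - int j * int l' ^ 2) *
      (\<Sum>k<d. omega_pow d ((int l' - int l) * int k))"
    by (simp add: sum_distrib_left mult.assoc)
  also have "\<dots> = (if l = l' then 1 else 0)"
    unfolding sum_omega_pow_mult[OF assms(1)] using eq_of_int_dvd_diff[OF assms(3,2)] assms(1) by auto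
  finally show ?thesis .
qed

lemma S_sum_same_block:
  assumes "d > 0"
  shows "S_sum d j j = of_nat d"
proof -
  have "S_sum d j j = (\<Sum>k<d. \<Sum>k'<d. if k = k' then 1 else 0)"
    unfolding S_sum_def by (intro sum.cong refl) (simp add: alpha_same_block[OF assms])
  thus ?thesis by simp
qed

lemma A_entry_diag: "d > 0 \<Longrightarrow> k < d \<Longrightarrow> A_entry d j j k k = real d"
  unfolding A_entry_def by (simp add: alpha_same_block S_sum_same_block)

section \<open>Gauss sums\<close>

lemma sum_shift_periodic:
  fixes f :: "int \<Rightarrow> 'a::comm_monoid_add"
  assumes d: "d > 0" and periodic: "\<And>x. f x = f (x mod int d)"
  shows "(\<Sum>t<d. f (int t + c)) = (\<Sum>k<d. f (int k))"
proof -
  define g where "g t = nat ((int t + c) mod int d)" for t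
  have "inj_on g {..<d}"
  proof
    fix x y assume "x \<in> {..<d}" "y \<in> {..<d}" "g x = g y"
    moreover from \<open>g x = g y\<close> have "(int x + c) mod int d = (int y + c) mod int d"
      using d unfolding g_def by (metis eq_nat_nat_iff of_nat_0_less_iff pos_mod_sign)
    hence "int x mod int d = int y mod int d" by (metis mod_diff_left_eq add_diff_cancel_right')
    ultimately show "x = y" by simp
  qed
  moreover have "g ` {..<d} \<subseteq> {..<d}" unfolding g_def using d by (auto simp: nat_less_iff)
  ultimately have "bij_betw g {..<d} {..<d}"
    by (simp add: bij_betw_def endo_inj_surj)
  have "(\<Sum>t<d. f (int t + c)) = (\<Sum>t<d. f (int (g t)))"
    by (intro sum.cong refl) (simp add: g_def periodic[of "int _ + c"] d)
  also have "\<dots> = (\<Sum>k<d. f (int k))" using sum.reindex_bij_betw[OF \<open>bij_betw g _ _\<close>] .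
  finally show ?thesis .
qed

definition gauss_sum :: "nat \<Rightarrow> nat \<Rightarrow> complex" where
  "gauss_sum d m = (\<Sum>k<d. omega_pow d (int k ^ 2 - int k * int m))"

lemma odd_prime_dvd_double:
  assumes "prime d" "odd d" "t < d" "int d dvd 2 * int t"
  shows "t = 0"
proof -
  have "d dvd 2 * t" using assms(4) by (metis int_dvd_int_iff of_nat_mult of_nat_numeral)
  moreover have "\<not> d dvd 2"
  proof
    assume "d dvd 2"
    hence "d \<le> 2" by (simp add: dvd_imp_le)
    thus False using assms(1,2) prime_ge_2_nat[of d] by (cases "d = 2") auto
  qed
  ultimately have "d dvd t" using assms(1) prime_dvd_mult_iff by blast
  thus "t = 0" using assms(3) by (metis dvd_imp_le not_le neq0_conv)
qed

lemma gauss_sum_mult_cnj: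
  assumes "prime d" "odd d"
  shows "gauss_sum d m * cnj (gauss_sum d m) = of_nat d"
proof -
  have d: "d > 0" using assms(1) prime_gt_0_nat by blast
  define f where "f k' x = omega_pow d (x ^ 2 - x * int m - (int k' ^ 2 - int k' * int m))" for k' x
  have periodic: "f k' x = f k' (x mod int d)" for k' x
    unfolding f_def
  proof (rule omega_pow_cong[OF d])
    have "(x ^ 2 - x * int m - (int k' ^ 2 - int k' * int m)) -
       ((x mod int d) ^ 2 - (x mod int d) * int m - (int k' ^ 2 - int k' * int m))
       = (x - x mod int d) * (x + x mod int d - int m)"
      by (simp add: algebra_simps power2_eq_square)
    thus "int d dvd (x ^ 2 - x * int m - (int k' ^ 2 - int k' * int m)) -
       ((x mod int d) ^ 2 - (x mod int d) * int m - (int k' ^ 2 - int k' * int m))"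
      by (simp add: minus_mod_eq_mult_div)
  qed
  have "gauss_sum d m * cnj (gauss_sum d m) = (\<Sum>k'<d. \<Sum>k<d. f k' (int k))"
    unfolding gauss_sum_def f_def sum_distrib_left sum_distrib_right cnj_sum
    by (intro sum.cong refl, simp add: cnj_omega_pow omega_pow_add[symmetric],
        rule arg_cong[where f = "omega_pow d"], simp)
  also have "\<dots> = (\<Sum>k'<d. \<Sum>t<d. f k' (int t + int k'))"
    by (intro sum.cong refl sum_shift_periodic[symmetric] d periodic)
  also have "\<dots> = (\<Sum>k'<d. \<Sum>t<d. omega_pow d (int t ^ 2 - int t * int m) * omega_pow d ((2 * int t) * int k'))"
    unfolding f_def omega_pow_add[symmetric]
    by (intro sum.cong refl arg_cong[where f = "omega_pow d"]) (simp add: algebra_simps power2_eq_square)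
  also have "\<dots> = (\<Sum>t<d. omega_pow d (int t ^ 2 - int t * int m) * (\<Sum>k'<d. omega_pow d ((2 * int t) * int k')))"
    by (subst sum.swap) (simp add: sum_distrib_left)
  also have "\<dots> = (\<Sum>t<d. if t = 0 then of_nat d else 0)"
    unfolding sum_omega_pow_mult[OF d]
    by (intro sum.cong refl) (use odd_prime_dvd_double[OF assms] in auto)
  also have "\<dots> = of_nat d" using d by simp
  finally show ?thesis .
qed

lemma norm_gauss_sum_sq:
  assumes "prime d" "odd d"
  shows "cmod (gauss_sum d m) ^ 2 = real d"
  using gauss_sum_mult_cnj[OF assms, of m] complex_norm_square[of "gauss_sum d m"]
  by (metis of_real_eq_iff of_real_of_nat_eq)

section \<open>The chirp transform\<close>

lemma int_dvd_square_diff_iff: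
  assumes "prime d" "m < d" "m' < d"
  shows "int d dvd (int m ^ 2 - int m' ^ 2) \<longleftrightarrow> m' = m \<or> (m \<noteq> 0 \<and> m' = d - m)"
proof
  assume h: "int d dvd (int m ^ 2 - int m' ^ 2)"
  have "int m ^ 2 - int m' ^ 2 = (int m - int m') * (int m + int m')"
    by (simp add: algebra_simps power2_eq_square)
  hence "int d dvd (int m - int m') \<or> int d dvd (int m + int m')"
    using h assms(1) prime_dvd_mult_iff by (metis prime_nat_int_transfer)
  thus "m' = m \<or> (m \<noteq> 0 \<and> m' = d - m)"
  proof
    assume "int d dvd (int m - int m')"
    thus ?thesis using eq_of_int_dvd_diff[OF assms(2,3)] by auto
  next
    assume "int d dvd (int m + int m')"
    then obtain q where q: "int m + int m' = int d * q" by blast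
    have "int d * q \<ge> 0" using q by simp
    hence "q \<ge> 0" using assms(2) by (simp add: zero_le_mult_iff)
    moreover have "int d * q < int d * 2" using q assms(2,3) by linarith
    hence "q < 2" using assms(2) mult_less_cancel_left_pos[of "int d" q 2] by simp
    ultimately have "q = 0 \<or> q = 1" by auto
    thus ?thesis using q assms(3) by auto
  qed
next
  assume "m' = m \<or> (m \<noteq> 0 \<and> m' = d - m)"
  thus "int d dvd (int m ^ 2 - int m' ^ 2)"
  proof
    assume "m \<noteq> 0 \<and> m' = d - m"
    hence "int m' = int d - int m" using assms(2) by simp
    moreover have "int m ^ 2 - (int d - int m) ^ 2 = int d * (2 * int m - int d)"
      by (simp add: algebra_simps power2_eq_square)
    ultimately show ?thesis by simp
  qed simp
qed

lemma sum_omega_pow_square_diff: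
  assumes "prime d" "odd d" "m < d" "m' < d"
  shows "(\<Sum>j<d. omega_pow d ((int m ^ 2 - int m' ^ 2) * int j)) =
    of_nat d * ((if m' = m then 1 else 0) + (if m \<noteq> 0 \<and> m' = d - m then 1 else 0))"
proof -
  have "d > 0" using assms(3) by simp
  moreover have "\<not> (m' = m \<and> m' = d - m)"
  proof
    assume "m' = m \<and> m' = d - m"
    hence "d = 2 * m" using assms(3) by auto
    thus False using assms(2) by simp
  qed
  ultimately show ?thesis
    unfolding sum_omega_pow_mult[OF \<open>d > 0\<close>] int_dvd_square_diff_iff[OF assms(1,3,4)] by auto
qed

lemma sum_lessThan_if_nonzero: "(\<Sum>m<(d::nat). if m \<noteq> 0 then f m else 0) = (\<Sum>m\<in>{1..<d}. f m)"
proof -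
  have "(\<Sum>m<d. if m \<noteq> 0 then f m else 0) = (\<Sum>m\<in>{..<d} \<inter> {m. m \<noteq> 0}. f m)"
    by (subst sum.inter_restrict) auto
  also have "{..<d} \<inter> {m. m \<noteq> 0} = {1..<d}" by auto
  finally show ?thesis .
qed

text \<open>Since \<open>d\<close> is prime, only the pairs \<open>m' = \<plusminus>m\<close> survive the sum over \<open>j\<close>;
  \<open>d\<close> odd keeps the two cases apart.\<close>

lemma sum_cnj_mult_sum_omega_pow_square_diff:
  fixes x :: "nat \<Rightarrow> complex"
  assumes "prime d" "odd d" "m < d"
  shows "(\<Sum>m'<d. x m * cnj (x m') * (\<Sum>j<d. omega_pow d ((int m ^ 2 - int m' ^ 2) * int j))) =
    of_nat d * (x m * cnj (x m) + (if m \<noteq> 0 then x m * cnj (x (d - m)) else 0))"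
proof -
  have "(\<Sum>m'<d. x m * cnj (x m') * (\<Sum>j<d. omega_pow d ((int m ^ 2 - int m' ^ 2) * int j))) =
      (\<Sum>m'<d. of_nat d * ((if m' = m then x m * cnj (x m') else 0) +
        (if m \<noteq> 0 \<and> m' = d - m then x m * cnj (x m') else 0)))"
    by (intro sum.cong refl) (simp add: sum_omega_pow_square_diff[OF assms])
  also have "\<dots> = of_nat d * ((\<Sum>m'<d. if m' = m then x m * cnj (x m') else 0) +
      (\<Sum>m'<d. if m \<noteq> 0 \<and> m' = d - m then x m * cnj (x m') else 0))"
    by (simp only: sum_distrib_left[symmetric] sum.distrib)
  finally show ?thesis
    using assms(3) by (cases "m = 0") (auto simp: sum.delta'[of "{..<d}", simplified])
qed

lemma sum_norm_chirp_sq_eq: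
  fixes x :: "nat \<Rightarrow> complex"
  assumes "prime d" "odd d"
  shows "(\<Sum>j<d. cmod (\<Sum>m<d. omega_pow d (int j * int m ^ 2) * x m) ^ 2) =
    real d * ((\<Sum>m<d. cmod (x m) ^ 2) + Re (\<Sum>m\<in>{1..<d}. x m * cnj (x (d - m))))"
proof -
  have term_eq: "(omega_pow d a * y) * cnj (omega_pow d b * z) = y * cnj z * omega_pow d (a - b)"
    for a b y z
    using omega_pow_add[of d a "- b"] by (simp add: cnj_omega_pow)
  have "complex_of_real (\<Sum>j<d. cmod (\<Sum>m<d. omega_pow d (int j * int m ^ 2) * x m) ^ 2)
     = (\<Sum>j<d. \<Sum>m<d. \<Sum>m'<d. (omega_pow d (int j * int m ^ 2) * x m) *
          cnj (omega_pow d (int j * int m' ^ 2) * x m'))"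
    unfolding of_real_sum complex_norm_square cnj_sum sum_product ..
  also have "\<dots> = (\<Sum>j<d. \<Sum>m<d. \<Sum>m'<d. x m * cnj (x m') * omega_pow d ((int m ^ 2 - int m' ^ 2) * int j))"
    unfolding term_eq
    by (intro sum.cong refl arg_cong[where f = "\<lambda>u. _ * omega_pow d u"]) (simp add: algebra_simps)
  also have "\<dots> = (\<Sum>m<d. \<Sum>m'<d. x m * cnj (x m') * (\<Sum>j<d. omega_pow d ((int m ^ 2 - int m' ^ 2) * int j)))"
    unfolding sum_distrib_left by (subst sum.swap, rule sum.cong[OF refl], subst sum.swap, rule refl)
  also have "\<dots> = (\<Sum>m<d. of_nat d * (x m * cnj (x m) + (if m \<noteq> 0 then x m * cnj (x (d - m)) else 0)))"
    by (intro sum.cong refl) (simp add: sum_cnj_mult_sum_omega_pow_square_diff[OF assms])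
  also have "\<dots> = of_nat d * ((\<Sum>m<d. x m * cnj (x m)) + (\<Sum>m\<in>{1..<d}. x m * cnj (x (d - m))))"
    by (simp only: sum_distrib_left[symmetric] sum.distrib sum_lessThan_if_nonzero)
  finally have "complex_of_real (\<Sum>j<d. cmod (\<Sum>m<d. omega_pow d (int j * int m ^ 2) * x m) ^ 2) =
    of_nat d * ((\<Sum>m<d. x m * cnj (x m)) + (\<Sum>m\<in>{1..<d}. x m * cnj (x (d - m))))" .
  from arg_cong[OF this, of Re] show ?thesis
    by (simp add: complex_norm_square[symmetric] flip: of_real_sum)
qed

lemma sum_reflect_atLeastLessThan: "(\<Sum>m\<in>{1..<d::nat}. f (d - m)) = (\<Sum>m\<in>{1..<d}. f m)"
  by (rule sum.reindex_bij_witness[where i = "\<lambda>m. d - m" and j = "\<lambda>m. d - m"]) auto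

lemma Re_sum_mult_cnj_reflect_le:
  fixes x :: "nat \<Rightarrow> complex"
  shows "Re (\<Sum>m\<in>{1..<d}. x m * cnj (x (d - m))) \<le> (\<Sum>m<d. cmod (x m) ^ 2)"
proof -
  have "Re (\<Sum>m\<in>{1..<d}. x m * cnj (x (d - m))) \<le> (\<Sum>m\<in>{1..<d}. (cmod (x m) ^ 2 + cmod (x (d - m)) ^ 2) / 2)"
    unfolding Re_sum
  proof (rule sum_mono)
    fix m
    have "Re (x m * cnj (x (d - m))) \<le> cmod (x m) * cmod (x (d - m))"
      by (metis complex_Re_le_cmod complex_mod_cnj norm_mult)
    also have "\<dots> \<le> (cmod (x m) ^ 2 + cmod (x (d - m)) ^ 2) / 2"
      using sum_squares_bound[of "cmod (x m)" "cmod (x (d - m))"] by (simp add: power2_eq_square)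
    finally show "Re (x m * cnj (x (d - m))) \<le> (cmod (x m) ^ 2 + cmod (x (d - m)) ^ 2) / 2" .
  qed
  also have "\<dots> = (\<Sum>m\<in>{1..<d}. cmod (x m) ^ 2)"
    unfolding sum_divide_distrib[symmetric] sum.distrib sum_reflect_atLeastLessThan[of "\<lambda>m. cmod (x m) ^ 2"]
    by simp
  also have "\<dots> \<le> (\<Sum>m<d. cmod (x m) ^ 2)" by (rule sum_mono2) auto
  finally show ?thesis .
qed

lemma sum_norm_chirp_sq_le:
  fixes x :: "nat \<Rightarrow> complex"
  assumes "prime d" "odd d"
  shows "(\<Sum>j<d. cmod (\<Sum>m<d. omega_pow d (int j * int m ^ 2) * x m) ^ 2) \<le> 2 * real d * (\<Sum>m<d. cmod (x m) ^ 2)"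
  using mult_left_mono[OF Re_sum_mult_cnj_reflect_le[of x d], of "real d"]
  unfolding sum_norm_chirp_sq_eq[OF assms] by (simp add: algebra_simps)

section \<open>The operator norm of \<open>A\<close>\<close>

definition block_sum :: "nat \<Rightarrow> nat \<Rightarrow> nat \<Rightarrow> complex" where
  "block_sum d j m = (\<Sum>k<d. phi d j k m)"

definition gram_vec :: "nat \<Rightarrow> nat \<Rightarrow> nat \<Rightarrow> nat \<Rightarrow> nat \<Rightarrow> complex" where
  "gram_vec d j k l m = phi d j k l * cnj (block_sum d j m)"

lemma block_sum_eq_chirp:
  "block_sum d j m = complex_of_real (1 / sqrt (real d)) * omega_pow d (int j * int m ^ 2) * gauss_sum d m"
proof -
  have "block_sum d j m = (\<Sum>k<d. complex_of_real (1 / sqrt (real d)) *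
      omega_pow d (int j * int m ^ 2) * omega_pow d (int k ^ 2 - int k * int m))"
    unfolding block_sum_def phi_eq_phase mult.assoc omega_pow_add[symmetric]
    by (intro sum.cong refl arg_cong[where f = "\<lambda>u. _ * omega_pow d u"]) (simp add: phase_def algebra_simps)
  thus ?thesis unfolding gauss_sum_def by (simp add: sum_distrib_left)
qed

lemma sum_norm_block_sum_transform_le:
  fixes x :: "nat \<Rightarrow> complex"
  assumes "prime d" "odd d" "r \<le> d"
  shows "(\<Sum>j<r. cmod (\<Sum>m<d. block_sum d j m * x m) ^ 2) \<le> 2 * real d * (\<Sum>m<d. cmod (x m) ^ 2)"
proof -
  have d: "d > 0" using assms(1) prime_gt_0_nat by blast
  define x' where "x' m = complex_of_real (1 / sqrt (real d)) * gauss_sum d m * x m" for m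
  have norm_x': "cmod (x' m) ^ 2 = cmod (x m) ^ 2" for m
    unfolding x'_def norm_mult power_mult_distrib
    using norm_gauss_sum_sq[OF assms(1,2)] d by (simp add: norm_divide power_divide)
  have "(\<Sum>j<r. cmod (\<Sum>m<d. block_sum d j m * x m) ^ 2) =
      (\<Sum>j<r. cmod (\<Sum>m<d. omega_pow d (int j * int m ^ 2) * x' m) ^ 2)"
    unfolding block_sum_eq_chirp x'_def by (simp add: mult_ac)
  also have "\<dots> \<le> (\<Sum>j<d. cmod (\<Sum>m<d. omega_pow d (int j * int m ^ 2) * x' m) ^ 2)"
    by (rule sum_mono2) (use assms(3) in auto)
  also have "\<dots> \<le> 2 * real d * (\<Sum>m<d. cmod (x' m) ^ 2)" by (rule sum_norm_chirp_sq_le[OF assms(1,2)])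
  finally show ?thesis unfolding norm_x' .
qed

lemma sum_norm_phi_transform_sq:
  fixes x :: "nat \<Rightarrow> complex"
  assumes "d > 0"
  shows "(\<Sum>k<d. cmod (\<Sum>l<d. cnj (phi d j k l) * x l) ^ 2) = (\<Sum>l<d. cmod (x l) ^ 2)"
proof -
  have "complex_of_real (\<Sum>k<d. cmod (\<Sum>l<d. cnj (phi d j k l) * x l) ^ 2)
     = (\<Sum>k<d. \<Sum>l<d. \<Sum>l'<d. (cnj (phi d j k l) * x l) * cnj (cnj (phi d j k l') * x l'))"
    unfolding of_real_sum complex_norm_square cnj_sum sum_product ..
  also have "\<dots> = (\<Sum>l<d. \<Sum>l'<d. x l * cnj (x l') * (\<Sum>k<d. cnj (phi d j k l) * phi d j k l'))"
    unfolding sum_distrib_left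
    by (subst sum.swap, rule sum.cong[OF refl], subst sum.swap, intro sum.cong refl) (simp add: mult_ac)
  also have "\<dots> = (\<Sum>l<d. \<Sum>l'<d. if l' = l then x l * cnj (x l') else 0)"
    by (intro sum.cong refl) (simp add: phi_columns_orthonormal[OF assms])
  also have "\<dots> = complex_of_real (\<Sum>l<d. cmod (x l) ^ 2)"
    unfolding of_real_sum complex_norm_square by simp
  finally show ?thesis using of_real_eq_iff by blast
qed

lemma S_sum_eq_inner_block_sums: "S_sum d j j' = (\<Sum>m<d. cnj (block_sum d j m) * block_sum d j' m)"
proof -
  have "S_sum d j j' = (\<Sum>k<d. \<Sum>l<d. \<Sum>k'<d. cnj (phi d j k l) * phi d j' k' l)"
    unfolding S_sum_def alpha_def by (rule sum.cong[OF refl], rule sum.swap)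
  also have "\<dots> = (\<Sum>l<d. \<Sum>k<d. \<Sum>k'<d. cnj (phi d j k l) * phi d j' k' l)" by (rule sum.swap)
  also have "\<dots> = (\<Sum>m<d. cnj (block_sum d j m) * block_sum d j' m)"
    unfolding block_sum_def cnj_sum sum_product ..
  finally show ?thesis .
qed

lemma alpha_mult_cnj_S_sum_eq_inner:
  "alpha d j j' k k' * cnj (S_sum d j j') = (\<Sum>l<d. \<Sum>m<d. cnj (gram_vec d j k l m) * gram_vec d j' k' l m)"
  unfolding S_sum_eq_inner_block_sums alpha_def gram_vec_def cnj_sum sum_product
  by (intro sum.cong refl) (simp add: mult_ac)

lemma sum_swap_outer_pairs:
  "(\<Sum>a\<in>A. \<Sum>b\<in>B. \<Sum>c\<in>C. \<Sum>e\<in>E. f a b c e) = (\<Sum>c\<in>C. \<Sum>e\<in>E. \<Sum>a\<in>A. \<Sum>b\<in>B. f a b c e)"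
proof -
  have "(\<Sum>a\<in>A. \<Sum>b\<in>B. \<Sum>c\<in>C. \<Sum>e\<in>E. f a b c e) = (\<Sum>a\<in>A. \<Sum>c\<in>C. \<Sum>e\<in>E. \<Sum>b\<in>B. f a b c e)"
    by (rule sum.cong[OF refl], subst sum.swap, rule sum.cong[OF refl], rule sum.swap)
  also have "\<dots> = (\<Sum>c\<in>C. \<Sum>e\<in>E. \<Sum>a\<in>A. \<Sum>b\<in>B. f a b c e)"
    by (subst sum.swap, rule sum.cong[OF refl], rule sum.swap)
  finally show ?thesis .
qed

definition A_apply :: "nat \<Rightarrow> nat \<Rightarrow> (nat \<times> nat \<Rightarrow> real) \<Rightarrow> nat \<Rightarrow> nat \<Rightarrow> real" where
  "A_apply d r z j k = (\<Sum>j'<r. \<Sum>k'<d. A_entry d j j' k k' * z (j', k'))"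

definition gram_apply :: "nat \<Rightarrow> nat \<Rightarrow> (nat \<times> nat \<Rightarrow> real) \<Rightarrow> nat \<Rightarrow> nat \<Rightarrow> complex" where
  "gram_apply d r z l m = (\<Sum>j<r. \<Sum>k<d. complex_of_real (z (j, k)) * gram_vec d j k l m)"

lemma A_apply_eq_Re_inner:
  "A_apply d r z j k = Re (\<Sum>l<d. \<Sum>m<d. cnj (gram_vec d j k l m) * gram_apply d r z l m)"
proof -
  have "A_apply d r z j k = Re (\<Sum>j'<r. \<Sum>k'<d. complex_of_real (z (j', k')) *
      (\<Sum>l<d. \<Sum>m<d. cnj (gram_vec d j k l m) * gram_vec d j' k' l m))"
    unfolding A_apply_def A_entry_def alpha_mult_cnj_S_sum_eq_inner by (simp add: mult.commute)
  also have "(\<Sum>j'<r. \<Sum>k'<d. complex_of_real (z (j', k')) *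
      (\<Sum>l<d. \<Sum>m<d. cnj (gram_vec d j k l m) * gram_vec d j' k' l m)) =
    (\<Sum>j'<r. \<Sum>k'<d. \<Sum>l<d. \<Sum>m<d. cnj (gram_vec d j k l m) * (complex_of_real (z (j', k')) * gram_vec d j' k' l m))"
    unfolding sum_distrib_left by (simp add: mult_ac)
  also have "\<dots> = (\<Sum>l<d. \<Sum>m<d. \<Sum>j'<r. \<Sum>k'<d. cnj (gram_vec d j k l m) * (complex_of_real (z (j', k')) * gram_vec d j' k' l m))"
    by (rule sum_swap_outer_pairs)
  also have "\<dots> = (\<Sum>l<d. \<Sum>m<d. cnj (gram_vec d j k l m) * gram_apply d r z l m)"
    unfolding gram_apply_def sum_distrib_left ..
  finally show ?thesis .
qed

lemma sum_norm_gram_apply_sq: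
  "(\<Sum>l<d. \<Sum>m<d. cmod (gram_apply d r z l m) ^ 2) = (\<Sum>j<r. \<Sum>k<d. z (j, k) * A_apply d r z j k)"
proof -
  have "complex_of_real (\<Sum>l<d. \<Sum>m<d. cmod (gram_apply d r z l m) ^ 2) =
      (\<Sum>l<d. \<Sum>m<d. \<Sum>j<r. \<Sum>k<d. complex_of_real (z (j, k)) * (gram_vec d j k l m * cnj (gram_apply d r z l m)))"
    unfolding of_real_sum complex_norm_square gram_apply_def[of d r z] sum_distrib_right by (simp add: mult_ac)
  also have "\<dots> = (\<Sum>j<r. \<Sum>k<d. complex_of_real (z (j, k)) *
      cnj (\<Sum>l<d. \<Sum>m<d. cnj (gram_vec d j k l m) * gram_apply d r z l m))"
    by (subst sum_swap_outer_pairs) (simp add: sum_distrib_left cnj_sum)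
  finally have "complex_of_real (\<Sum>l<d. \<Sum>m<d. cmod (gram_apply d r z l m) ^ 2) =
      (\<Sum>j<r. \<Sum>k<d. complex_of_real (z (j, k)) *
        cnj (\<Sum>l<d. \<Sum>m<d. cnj (gram_vec d j k l m) * gram_apply d r z l m))" .
  from arg_cong[OF this, of Re] show ?thesis
    unfolding A_apply_eq_Re_inner by (simp add: Re_sum)
qed

lemma sum_norm_gram_adjoint_sq_le:
  fixes y :: "nat \<Rightarrow> nat \<Rightarrow> complex"
  assumes "prime d" "odd d" "r \<le> d"
  shows "(\<Sum>j<r. \<Sum>k<d. cmod (\<Sum>l<d. \<Sum>m<d. cnj (gram_vec d j k l m) * y l m) ^ 2)
    \<le> 2 * real d * (\<Sum>l<d. \<Sum>m<d. cmod (y l m) ^ 2)"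
proof -
  have d: "d > 0" using assms(1) prime_gt_0_nat by blast
  have "(\<Sum>j<r. \<Sum>k<d. cmod (\<Sum>l<d. \<Sum>m<d. cnj (gram_vec d j k l m) * y l m) ^ 2)
      = (\<Sum>j<r. \<Sum>k<d. cmod (\<Sum>l<d. cnj (phi d j k l) * (\<Sum>m<d. block_sum d j m * y l m)) ^ 2)"
    unfolding gram_vec_def sum_distrib_left by (simp add: mult_ac)
  also have "\<dots> = (\<Sum>l<d. \<Sum>j<r. cmod (\<Sum>m<d. block_sum d j m * y l m) ^ 2)"
    by (simp add: sum_norm_phi_transform_sq[OF d] sum.swap[of _ "{..<r}"])
  also have "\<dots> \<le> (\<Sum>l<d. 2 * real d * (\<Sum>m<d. cmod (y l m) ^ 2))"
    by (intro sum_mono sum_norm_block_sum_transform_le assms)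
  finally show ?thesis by (simp add: sum_distrib_left)
qed

lemma mult_le_sq_div_plus_sq:
  fixes a z c :: real
  assumes "c > 0"
  shows "z * a \<le> a ^ 2 / (4 * c) + c * z ^ 2"
proof -
  have "0 \<le> (a - 2 * c * z) ^ 2" by simp
  hence "4 * c * (z * a) \<le> 4 * c * (a ^ 2 / (4 * c) + c * z ^ 2)"
    using assms by (simp add: power2_eq_square algebra_simps)
  thus ?thesis using assms by simp
qed

lemma sum_A_apply_sq_le:
  assumes "prime d" "odd d" "r \<le> d"
  shows "(\<Sum>j<r. \<Sum>k<d. A_apply d r z j k ^ 2) \<le> 4 * real d ^ 2 * (\<Sum>j<r. \<Sum>k<d. z (j, k) ^ 2)"
proof -
  have d: "real d > 0" using assms(1) prime_gt_0_nat by simp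
  define Sa where "Sa = (\<Sum>j<r. \<Sum>k<d. A_apply d r z j k ^ 2)"
  define Sz where "Sz = (\<Sum>j<r. \<Sum>k<d. z (j, k) ^ 2)"
  have Re_sq_le: "Re w ^ 2 \<le> cmod w ^ 2" for w
    using power_mono[OF abs_Re_le_cmod abs_ge_zero, of w 2] by simp
  have "Sa \<le> (\<Sum>j<r. \<Sum>k<d. cmod (\<Sum>l<d. \<Sum>m<d. cnj (gram_vec d j k l m) * gram_apply d r z l m) ^ 2)"
    unfolding Sa_def A_apply_eq_Re_inner
    by (intro sum_mono Re_sq_le)
  also have "\<dots> \<le> 2 * real d * (\<Sum>l<d. \<Sum>m<d. cmod (gram_apply d r z l m) ^ 2)"
    by (rule sum_norm_gram_adjoint_sq_le[OF assms])
  also have "\<dots> = 2 * real d * (\<Sum>j<r. \<Sum>k<d. z (j, k) * A_apply d r z j k)"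
    unfolding sum_norm_gram_apply_sq ..
  also have "\<dots> \<le> 2 * real d * (\<Sum>j<r. \<Sum>k<d. A_apply d r z j k ^ 2 / (4 * real d) + real d * z (j, k) ^ 2)"
    using d by (intro mult_left_mono sum_mono mult_le_sq_div_plus_sq) auto
  also have "\<dots> = 2 * real d * (Sa / (4 * real d) + real d * Sz)"
    unfolding Sa_def Sz_def sum.distrib sum_divide_distrib sum_distrib_left ..
  also have "\<dots> = Sa / 2 + 2 * real d ^ 2 * Sz"
    using d by (simp add: field_simps power2_eq_square)
  finally show ?thesis unfolding Sa_def[symmetric] Sz_def[symmetric] by simp
qed

section \<open>Resampling single coordinates of random bit pairs\<close>

lemma sum_PiE_resample:
  assumes "i \<in> I" "finite (G i)"
  shows "(\<Sum>f\<in>PiE I G. F f) * real (card (G i)) = (\<Sum>f\<in>PiE I G. \<Sum>x\<in>G i. F (f(i := x)))"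
proof -
  define J where "J = I - {i}"
  have I: "I = insert i J" and iJ: "i \<notin> J" using assms(1) unfolding J_def by auto
  have PI: "PiE I G = (\<lambda>(y, g). g(i := y)) ` (G i \<times> PiE J G)" unfolding I by (rule PiE_insert_eq)
  have inj: "inj_on (\<lambda>(y, g). g(i := y)) (G i \<times> PiE J G)" by (rule inj_combinator[OF iJ])
  have "(\<Sum>f\<in>PiE I G. F f) = (\<Sum>(y, g)\<in>G i \<times> PiE J G. F (g(i := y)))"
    unfolding PI by (subst sum.reindex[OF inj]) (simp add: case_prod_beta)
  hence "(\<Sum>f\<in>PiE I G. F f) = (\<Sum>y\<in>G i. \<Sum>g\<in>PiE J G. F (g(i := y)))"
    unfolding sum.cartesian_product[symmetric] by simp
  moreover have "(\<Sum>f\<in>PiE I G. \<Sum>x\<in>G i. F (f(i := x))) =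
      (\<Sum>(y, g)\<in>G i \<times> PiE J G. \<Sum>x\<in>G i. F (g(i := y, i := x)))"
    unfolding PI by (subst sum.reindex[OF inj]) (simp add: case_prod_beta)
  hence "(\<Sum>f\<in>PiE I G. \<Sum>x\<in>G i. F (f(i := x))) = (\<Sum>y\<in>G i. \<Sum>g\<in>PiE J G. \<Sum>x\<in>G i. F (g(i := x)))"
    unfolding sum.cartesian_product[symmetric] by simp
  moreover have "\<dots> = real (card (G i)) * (\<Sum>x\<in>G i. \<Sum>g\<in>PiE J G. F (g(i := x)))"
    by (simp add: sum.swap[of _ "PiE J G"])
  ultimately show ?thesis by (simp add: mult.commute sum.swap[of _ "G i"])
qed

definition coord :: "'a \<Rightarrow> ('a \<Rightarrow> bool) \<times> ('a \<Rightarrow> bool) \<Rightarrow> bool \<times> bool" where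
  "coord i \<omega> = (fst \<omega> i, snd \<omega> i)"

definition set_coord :: "'a \<Rightarrow> bool \<times> bool \<Rightarrow> ('a \<Rightarrow> bool) \<times> ('a \<Rightarrow> bool) \<Rightarrow> ('a \<Rightarrow> bool) \<times> ('a \<Rightarrow> bool)" where
  "set_coord i x \<omega> = ((fst \<omega>)(i := fst x), (snd \<omega>)(i := snd x))"

lemma coord_set_coord [simp]:
  "coord i (set_coord i x \<omega>) = x"
  "j \<noteq> i \<Longrightarrow> coord j (set_coord i x \<omega>) = coord j \<omega>"
  unfolding coord_def set_coord_def by auto

abbreviation bool_funs :: "'a set \<Rightarrow> ('a \<Rightarrow> bool) set" where
  "bool_funs I \<equiv> PiE I (\<lambda>_. UNIV)"

lemma sum_UNIV_bool_pair: "(\<Sum>z\<in>(UNIV :: (bool \<times> bool) set). G z) = (\<Sum>x\<in>UNIV. \<Sum>y\<in>UNIV. G (x, y))"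
  unfolding sum.cartesian_product UNIV_Times_UNIV by simp

lemma sum_Times_eq_sum_sum: "(\<Sum>\<omega>\<in>A \<times> B. H \<omega>) = (\<Sum>b\<in>A. \<Sum>b'\<in>B. H (b, b'))"
  by (simp add: sum.cartesian_product)

lemma sum_bool_pairs_resample:
  fixes F :: "('a \<Rightarrow> bool) \<times> ('a \<Rightarrow> bool) \<Rightarrow> real"
  assumes "i \<in> I"
  shows "(\<Sum>\<omega>\<in>bool_funs I \<times> bool_funs I. F \<omega>) =
    (\<Sum>\<omega>\<in>bool_funs I \<times> bool_funs I. \<Sum>x\<in>UNIV. F (set_coord i x \<omega>)) / 4"
proof -
  have R: "(\<Sum>f\<in>bool_funs I. H f) = (\<Sum>f\<in>bool_funs I. \<Sum>x\<in>UNIV. H (f(i := x))) / 2"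
    for H :: "('a \<Rightarrow> bool) \<Rightarrow> real"
    using sum_PiE_resample[OF assms, of "\<lambda>_. UNIV" H] by simp
  have "(\<Sum>\<omega>\<in>bool_funs I \<times> bool_funs I. F \<omega>) = (\<Sum>b\<in>bool_funs I. \<Sum>b'\<in>bool_funs I. F (b, b'))"
    by (rule sum_Times_eq_sum_sum)
  also have "\<dots> = (\<Sum>b\<in>bool_funs I. (\<Sum>b'\<in>bool_funs I. \<Sum>y\<in>UNIV. F (b, b'(i := y))) / 2)"
    by (intro sum.cong refl R)
  also have "\<dots> = (\<Sum>b\<in>bool_funs I. \<Sum>x\<in>UNIV. (\<Sum>b'\<in>bool_funs I. \<Sum>y\<in>UNIV. F (b(i := x), b'(i := y))) / 2) / 2"
    by (rule R)
  also have "\<dots> = (\<Sum>b\<in>bool_funs I. \<Sum>b'\<in>bool_funs I. \<Sum>x\<in>UNIV. \<Sum>y\<in>UNIV. F (b(i := x), b'(i := y))) / 4"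
    by (simp add: sum_divide_distrib[symmetric] sum.swap[of _ UNIV "bool_funs I"])
  also have "\<dots> = (\<Sum>\<omega>\<in>bool_funs I \<times> bool_funs I. \<Sum>x\<in>UNIV. F (set_coord i x \<omega>)) / 4"
    unfolding set_coord_def sum_UNIV_bool_pair sum_Times_eq_sum_sum[of _ "bool_funs I" "bool_funs I"] by simp
  finally show ?thesis .
qed

lemma sum_exp_resample_coord_le:
  fixes D M :: "('a \<Rightarrow> bool) \<times> ('a \<Rightarrow> bool) \<Rightarrow> real"
    and h :: "('a \<Rightarrow> bool) \<times> ('a \<Rightarrow> bool) \<Rightarrow> bool \<times> bool \<Rightarrow> real"
  assumes "i \<in> I"
    and bound: "\<And>\<omega>. \<omega> \<in> bool_funs I \<times> bool_funs I \<Longrightarrow> (\<Sum>x\<in>UNIV. exp (h \<omega> x)) / 4 \<le> exp (M \<omega>)"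
    and inv: "\<And>\<omega> x. \<omega> \<in> bool_funs I \<times> bool_funs I \<Longrightarrow>
      D (set_coord i x \<omega>) = D \<omega> \<and> h (set_coord i x \<omega>) = h \<omega> \<and> M (set_coord i x \<omega>) = M \<omega>"
  shows "(\<Sum>\<omega>\<in>bool_funs I \<times> bool_funs I. exp (D \<omega> + h \<omega> (coord i \<omega>))) \<le>
    (\<Sum>\<omega>\<in>bool_funs I \<times> bool_funs I. exp (D \<omega> + M \<omega>))"
proof -
  let ?\<Omega> = "bool_funs I \<times> bool_funs I"
  have "(\<Sum>\<omega>\<in>?\<Omega>. exp (D \<omega> + h \<omega> (coord i \<omega>))) =
      (\<Sum>\<omega>\<in>?\<Omega>. \<Sum>x\<in>UNIV. exp (D (set_coord i x \<omega>) + h (set_coord i x \<omega>) (coord i (set_coord i x \<omega>)))) / 4"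
    by (rule sum_bool_pairs_resample[OF assms(1)])
  also have "\<dots> = (\<Sum>\<omega>\<in>?\<Omega>. exp (D \<omega>) * ((\<Sum>x\<in>UNIV. exp (h \<omega> x)) / 4))"
    unfolding sum_divide_distrib
    by (intro sum.cong refl) (simp add: inv exp_add sum_distrib_left sum_divide_distrib)
  also have "\<dots> \<le> (\<Sum>\<omega>\<in>?\<Omega>. exp (D \<omega>) * exp (M \<omega>))"
    by (intro sum_mono mult_left_mono bound) auto
  finally show ?thesis by (simp add: exp_add)
qed

text \<open>The moment generating function of a sum of terms each depending on a single coordinate
  \<open>i \<in> T\<close> (with coefficients depending only on coordinates outside \<open>T\<close>) factorizes.\<close>

lemma sum_exp_sum_coord_le:
  fixes D :: "('a \<Rightarrow> bool) \<times> ('a \<Rightarrow> bool) \<Rightarrow> real"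
    and g M :: "'a \<Rightarrow> ('a \<Rightarrow> bool) \<times> ('a \<Rightarrow> bool) \<Rightarrow> real"
    and h :: "'a \<Rightarrow> ('a \<Rightarrow> bool) \<times> ('a \<Rightarrow> bool) \<Rightarrow> bool \<times> bool \<Rightarrow> real"
  assumes "finite T" "T \<subseteq> I"
    and bound: "\<And>i \<omega>. i \<in> T \<Longrightarrow> \<omega> \<in> bool_funs I \<times> bool_funs I \<Longrightarrow>
      (\<Sum>x\<in>UNIV. exp (h i \<omega> x)) / 4 \<le> exp (M i \<omega>)"
    and inv_h: "\<And>i j \<omega> x. i \<in> T \<Longrightarrow> j \<in> T \<Longrightarrow> \<omega> \<in> bool_funs I \<times> bool_funs I \<Longrightarrow>
      h i (set_coord j x \<omega>) = h i \<omega>"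
    and inv_M: "\<And>i j \<omega> x. i \<in> T \<Longrightarrow> j \<in> T \<Longrightarrow> \<omega> \<in> bool_funs I \<times> bool_funs I \<Longrightarrow>
      M i (set_coord j x \<omega>) = M i \<omega>"
    and inv_D: "\<And>j \<omega> x. j \<in> T \<Longrightarrow> \<omega> \<in> bool_funs I \<times> bool_funs I \<Longrightarrow> D (set_coord j x \<omega>) = D \<omega>"
  shows "(\<Sum>\<omega>\<in>bool_funs I \<times> bool_funs I. exp (D \<omega> + (\<Sum>i\<in>T. h i \<omega> (coord i \<omega>))))
    \<le> (\<Sum>\<omega>\<in>bool_funs I \<times> bool_funs I. exp (D \<omega> + (\<Sum>i\<in>T. M i \<omega>)))"
  using assms(1,2) bound inv_h inv_M inv_D
proof (induction T arbitrary: D rule: finite_induct)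
  case empty
  then show ?case by simp
next
  case (insert i T)
  let ?\<Omega> = "bool_funs I \<times> bool_funs I"
  define D' where "D' \<omega> = D \<omega> + (\<Sum>j\<in>T. h j \<omega> (coord j \<omega>))" for \<omega>
  have "D' (set_coord i x \<omega>) = D' \<omega>" if "\<omega> \<in> ?\<Omega>" for x \<omega>
  proof -
    have "h j (set_coord i x \<omega>) (coord j (set_coord i x \<omega>)) = h j \<omega> (coord j \<omega>)" if "j \<in> T" for j
    proof -
      have "j \<noteq> i" using that insert.hyps(2) by auto
      thus ?thesis using insert.prems(3)[of j i \<omega> x] \<open>\<omega> \<in> ?\<Omega>\<close> that by simp
    qed
    thus ?thesis unfolding D'_def using insert.prems(5)[of i \<omega> x] that by simp
  qed
  hence "(\<Sum>\<omega>\<in>?\<Omega>. exp (D' \<omega> + h i \<omega> (coord i \<omega>))) \<le> (\<Sum>\<omega>\<in>?\<Omega>. exp (D' \<omega> + M i \<omega>))"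
    using insert.prems by (intro sum_exp_resample_coord_le) auto
  also have "\<dots> = (\<Sum>\<omega>\<in>?\<Omega>. exp ((D \<omega> + M i \<omega>) + (\<Sum>j\<in>T. h j \<omega> (coord j \<omega>))))"
    unfolding D'_def by (simp add: algebra_simps)
  also have "\<dots> \<le> (\<Sum>\<omega>\<in>?\<Omega>. exp ((D \<omega> + M i \<omega>) + (\<Sum>j\<in>T. M j \<omega>)))"
    using insert.prems by (intro insert.IH) auto
  finally show ?case
    unfolding D'_def using insert.hyps by (simp add: algebra_simps)
qed

section \<open>The expectation\<close>

definition sign_diff :: "bool \<times> bool \<Rightarrow> real" where
  "sign_diff x = sgn_bit (fst x) - sgn_bit (snd x)"

lemma sign_diff_simps [simp]:
  "sign_diff (True, True) = 0" "sign_diff (False, False) = 0"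
  "sign_diff (True, False) = -2" "sign_diff (False, True) = 2"
  unfolding sign_diff_def sgn_bit_def by simp_all

lemma sign_diff_sq_le: "sign_diff x ^ 2 \<le> 4"
  by (cases x) (auto simp: sign_diff_def sgn_bit_def)

lemma sum_UNIV_bool_pair_expand:
  "(\<Sum>x\<in>(UNIV :: (bool \<times> bool) set). G x) = G (True, True) + G (True, False) + G (False, True) + (G (False, False) :: real)"
  unfolding sum_UNIV_bool_pair UNIV_bool by (simp add: algebra_simps)

lemma sum_sign_diff_coord_mult:
  assumes "i \<in> I"
  shows "(\<Sum>\<omega>\<in>bool_funs I \<times> bool_funs I. sign_diff (coord i \<omega>) * sign_diff (coord i' \<omega>)) =
    (if i = i' then 2 * real (card (bool_funs I \<times> bool_funs I)) else 0)"
proof -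
  have "(\<Sum>x\<in>UNIV. sign_diff (coord i (set_coord i x \<omega>)) * sign_diff (coord i' (set_coord i x \<omega>))) =
      (if i = i' then 8 else 0)" for \<omega>
    by (cases "i = i'") (simp_all add: sum_UNIV_bool_pair_expand)
  thus ?thesis by (simp add: sum_bool_pairs_resample[OF assms])
qed

definition delta_pair :: "(nat \<times> nat \<Rightarrow> bool) \<times> (nat \<times> nat \<Rightarrow> bool) \<Rightarrow> nat \<times> nat \<Rightarrow> real" where
  "delta_pair \<omega> = delta_of (fst \<omega>) (snd \<omega>)"

lemma delta_pair_eq_sign_diff: "delta_pair \<omega> i = sign_diff (coord i \<omega>)"
  unfolding delta_pair_def sign_diff_def delta_of_def coord_def by simp

abbreviation cells :: "nat \<Rightarrow> nat \<Rightarrow> (nat \<times> nat) set" where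
  "cells r d \<equiv> {..<r} \<times> {..<d}"

abbreviation sample_space :: "nat \<Rightarrow> nat \<Rightarrow> ((nat \<times> nat \<Rightarrow> bool) \<times> (nat \<times> nat \<Rightarrow> bool)) set" where
  "sample_space r d \<equiv> bool_funs (cells r d) \<times> bool_funs (cells r d)"

definition A_pair :: "nat \<Rightarrow> nat \<times> nat \<Rightarrow> nat \<times> nat \<Rightarrow> real" where
  "A_pair d i i' = A_entry d (fst i) (fst i') (snd i) (snd i')"

lemma quad_form_eq_sum_cells:
  "quad_form d r \<delta> = (\<Sum>i\<in>cells r d. \<Sum>i'\<in>cells r d. \<delta> i * A_pair d i i' * \<delta> i')"
proof -
  have "(\<Sum>i\<in>cells r d. \<Sum>i'\<in>cells r d. \<delta> i * A_pair d i i' * \<delta> i') =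
      (\<Sum>j<r. \<Sum>k<d. \<Sum>j'<r. \<Sum>k'<d. \<delta> (j, k) * A_entry d j j' k k' * \<delta> (j', k'))"
    unfolding sum_Times_eq_sum_sum A_pair_def by simp
  also have "\<dots> = quad_form d r \<delta>"
    unfolding quad_form_def by (rule sum.cong[OF refl], rule sum.swap)
  finally show ?thesis by simp
qed

lemma sum_quad_form_delta_pair:
  assumes "d > 0"
  shows "(\<Sum>\<omega>\<in>sample_space r d. quad_form d r (delta_pair \<omega>)) =
    2 * real (card (sample_space r d)) * real d ^ 2 * real r"
proof -
  let ?\<Omega> = "sample_space r d"
  have "(\<Sum>\<omega>\<in>?\<Omega>. quad_form d r (delta_pair \<omega>)) =
      (\<Sum>i\<in>cells r d. \<Sum>i'\<in>cells r d. A_pair d i i' * (\<Sum>\<omega>\<in>?\<Omega>. delta_pair \<omega> i * delta_pair \<omega> i'))"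
    unfolding quad_form_eq_sum_cells sum_distrib_left
    by (subst sum.swap, rule sum.cong[OF refl], subst sum.swap) (simp add: mult_ac)
  also have "\<dots> = (\<Sum>i\<in>cells r d. real d * (2 * real (card ?\<Omega>)))"
  proof (intro sum.cong refl)
    fix i assume i: "i \<in> cells r d"
    hence "A_pair d i i = real d" unfolding A_pair_def using A_entry_diag[OF assms] by auto
    thus "(\<Sum>i'\<in>cells r d. A_pair d i i' * (\<Sum>\<omega>\<in>?\<Omega>. delta_pair \<omega> i * delta_pair \<omega> i')) =
        real d * (2 * real (card ?\<Omega>))"
      using i unfolding delta_pair_eq_sign_diff sum_sign_diff_coord_mult[OF i]
      by (simp add: if_distrib cong: if_cong)
  qed
  also have "\<dots> = 2 * real (card ?\<Omega>) * real d ^ 2 * real r"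
    by (simp add: card_cartesian_product power2_eq_square)
  finally show ?thesis .
qed

section \<open>A sub-Gaussian estimate\<close>

lemma cosh_le_exp_half_sq: "cosh y \<le> exp ((y::real) ^ 2 / 2)"
proof -
  define a where "a = \<bar>y\<bar>"
  have a0: "a \<ge> 0" unfolding a_def by simp
  have "cosh y = cosh a" unfolding a_def by (cases "y \<ge> 0") auto
  have "- (2 * a) * (1 / 2) + ln (1 + (1 / 2) * (exp (2 * a) - 1)) \<le> (2 * a) ^ 2 / 8"
    using Hoeffdings_lemma_aux[of "2 * a" "1 / 2"] a0 by simp
  hence "ln ((1 + exp (2 * a)) / 2) \<le> a + a ^ 2 / 2"
    by (simp add: field_simps power2_eq_square)
  hence "(1 + exp (2 * a)) / 2 \<le> exp (a + a ^ 2 / 2)"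
    by (metis add_pos_pos divide_pos_pos exp_gt_zero exp_le_cancel_iff exp_ln zero_less_one zero_less_numeral)
  hence "exp (- a) * ((1 + exp (2 * a)) / 2) \<le> exp (- a) * exp (a + a ^ 2 / 2)"
    by (intro mult_left_mono) auto
  moreover have "exp (- a) * ((1 + exp (2 * a)) / 2) = cosh a"
    by (simp add: cosh_def field_simps flip: exp_add)
  moreover have "exp (- a) * exp (a + a ^ 2 / 2) = exp (y ^ 2 / 2)"
    unfolding a_def by (simp flip: exp_add)
  ultimately have "cosh a \<le> exp (y ^ 2 / 2)" by simp
  thus ?thesis unfolding \<open>cosh y = cosh a\<close> .
qed

lemma mean_exp_sign_diff_le: "(\<Sum>x\<in>UNIV. exp (- u * sign_diff x)) / 4 \<le> exp (u ^ 2)"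
proof -
  have "(\<Sum>x\<in>UNIV. exp (- u * sign_diff x)) / 4 = cosh u ^ 2"
    by (simp add: sum_UNIV_bool_pair_expand cosh_def power2_eq_square field_simps flip: exp_add)
  also have "\<dots> \<le> exp (u ^ 2 / 2) ^ 2"
    by (rule power_mono[OF cosh_le_exp_half_sq]) simp
  also have "\<dots> = exp (u ^ 2)" by (simp add: power2_eq_square flip: exp_add)
  finally show ?thesis .
qed

section \<open>Decoupling the off-diagonal part\<close>

lemma card_Pow_mem_not_mem:
  assumes "finite I" "i \<in> I" "i' \<in> I" "i \<noteq> i'"
  shows "card {T \<in> Pow I. i \<in> T \<and> i' \<notin> T} = 2 ^ (card I - 2)"
proof -
  have "{T \<in> Pow I. i \<in> T \<and> i' \<notin> T} = insert i ` Pow (I - {i, i'})"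
  proof
    show "{T \<in> Pow I. i \<in> T \<and> i' \<notin> T} \<subseteq> insert i ` Pow (I - {i, i'})"
    proof
      fix T assume "T \<in> {T \<in> Pow I. i \<in> T \<and> i' \<notin> T}"
      hence "T = insert i (T - {i})" "T - {i} \<in> Pow (I - {i, i'})" by auto
      thus "T \<in> insert i ` Pow (I - {i, i'})" by blast
    qed
  qed (use assms(2,4) in blast)
  moreover have "inj_on (insert i) (Pow (I - {i, i'}))"
    by (rule inj_onI) (metis Diff_iff PowD insertI1 insert_ident subsetD)
  ultimately have "card {T \<in> Pow I. i \<in> T \<and> i' \<notin> T} = card (Pow (I - {i, i'}))"
    by (simp add: card_image)
  also have "\<dots> = 2 ^ (card I - 2)"
    using assms by (simp add: card_Pow card_Diff_subset)
  finally show ?thesis .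
qed

lemma sum_Pow_cut:
  assumes "finite I"
  shows "(\<Sum>T\<in>Pow I. \<Sum>i\<in>I. \<Sum>i'\<in>I. if i \<in> T \<and> i' \<notin> T then F i i' else 0)
         = 2 ^ (card I - 2) * (\<Sum>i\<in>I. \<Sum>i'\<in>I. if i' \<noteq> i then F i i' else (0::real))"
proof -
  have "(\<Sum>T\<in>Pow I. if i \<in> T \<and> i' \<notin> T then F i i' else 0) = 2 ^ (card I - 2) * (if i' \<noteq> i then F i i' else 0)"
    if "i \<in> I" "i' \<in> I" for i i'
  proof -
    have "(\<Sum>T\<in>Pow I. if i \<in> T \<and> i' \<notin> T then F i i' else 0) =
        real (card {T \<in> Pow I. i \<in> T \<and> i' \<notin> T}) * F i i'"
      using sum.inter_filter[of "Pow I" "\<lambda>_. F i i'" "\<lambda>T. i \<in> T \<and> i' \<notin> T"] assms by simp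
    also have "\<dots> = 2 ^ (card I - 2) * (if i' \<noteq> i then F i i' else 0)"
    proof (cases "i' = i")
      case True
      hence "{T \<in> Pow I. i \<in> T \<and> i' \<notin> T} = {}" by auto
      thus ?thesis using True by simp
    next
      case False
      thus ?thesis using card_Pow_mem_not_mem[OF assms that] by simp
    qed
    finally show ?thesis .
  qed
  hence "(\<Sum>i\<in>I. \<Sum>i'\<in>I. \<Sum>T\<in>Pow I. if i \<in> T \<and> i' \<notin> T then F i i' else 0)
      = (\<Sum>i\<in>I. \<Sum>i'\<in>I. 2 ^ (card I - 2) * (if i' \<noteq> i then F i i' else 0))"
    by (intro sum.cong refl) auto
  thus ?thesis
    by (subst sum.swap, subst (2) sum.swap) (simp add: sum_distrib_left sum.swap[of _ "Pow I"])
qed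

definition cross_term :: "nat \<Rightarrow> (nat \<times> nat \<Rightarrow> bool) \<times> (nat \<times> nat \<Rightarrow> bool) \<Rightarrow> nat \<times> nat \<Rightarrow> nat \<times> nat \<Rightarrow> real" where
  "cross_term d \<omega> i i' = delta_pair \<omega> i * A_pair d i i' * delta_pair \<omega> i'"

definition offdiag_form :: "nat \<Rightarrow> nat \<Rightarrow> (nat \<times> nat \<Rightarrow> bool) \<times> (nat \<times> nat \<Rightarrow> bool) \<Rightarrow> real" where
  "offdiag_form d r \<omega> = (\<Sum>i\<in>cells r d. \<Sum>i'\<in>cells r d. if i' \<noteq> i then cross_term d \<omega> i i' else 0)"

definition cut_form ::
    "nat \<Rightarrow> nat \<Rightarrow> (nat \<times> nat) set \<Rightarrow> (nat \<times> nat \<Rightarrow> bool) \<times> (nat \<times> nat \<Rightarrow> bool) \<Rightarrow> real" where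
  "cut_form d r T \<omega> = (\<Sum>i\<in>cells r d. \<Sum>i'\<in>cells r d. if i \<in> T \<and> i' \<notin> T then cross_term d \<omega> i i' else 0)"

definition cut_field ::
    "nat \<Rightarrow> nat \<Rightarrow> (nat \<times> nat) set \<Rightarrow> (nat \<times> nat \<Rightarrow> bool) \<times> (nat \<times> nat \<Rightarrow> bool) \<Rightarrow> nat \<times> nat \<Rightarrow> real" where
  "cut_field d r T \<omega> i = (\<Sum>i'\<in>cells r d. if i' \<notin> T then A_pair d i i' * delta_pair \<omega> i' else 0)"

lemma quad_form_eq_diag_plus_offdiag:
  assumes "d > 0"
  shows "quad_form d r (delta_pair \<omega>) = real d * (\<Sum>i\<in>cells r d. delta_pair \<omega> i ^ 2) + offdiag_form d r \<omega>"
proof -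
  have "quad_form d r (delta_pair \<omega>) = (\<Sum>i\<in>cells r d. \<Sum>i'\<in>cells r d.
      (if i' = i then cross_term d \<omega> i i else 0) + (if i' \<noteq> i then cross_term d \<omega> i i' else 0))"
    unfolding quad_form_eq_sum_cells cross_term_def by (intro sum.cong refl) auto
  also have "\<dots> = (\<Sum>i\<in>cells r d. cross_term d \<omega> i i) + offdiag_form d r \<omega>"
    unfolding sum.distrib offdiag_form_def by simp
  also have "(\<Sum>i\<in>cells r d. cross_term d \<omega> i i) = real d * (\<Sum>i\<in>cells r d. delta_pair \<omega> i ^ 2)"
    unfolding sum_distrib_left cross_term_def A_pair_def
    by (intro sum.cong refl) (auto simp: A_entry_diag[OF assms] power2_eq_square)
  finally show ?thesis .
qed

lemma cut_form_eq_sum_cut_field: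
  assumes "T \<subseteq> cells r d"
  shows "cut_form d r T \<omega> = (\<Sum>i\<in>T. delta_pair \<omega> i * cut_field d r T \<omega> i)"
proof -
  have "cut_form d r T \<omega> = (\<Sum>i\<in>cells r d. if i \<in> T then delta_pair \<omega> i * cut_field d r T \<omega> i else 0)"
    unfolding cut_form_def cut_field_def cross_term_def
    by (intro sum.cong refl) (auto simp: sum_distrib_left intro!: sum.cong simp: mult_ac)
  also have "\<dots> = (\<Sum>i\<in>cells r d \<inter> T. delta_pair \<omega> i * cut_field d r T \<omega> i)"
    by (simp add: sum.inter_restrict)
  also have "cells r d \<inter> T = T" using assms by auto
  finally show ?thesis .
qed

lemma cut_field_eq_A_apply:
  "i \<in> cells r d \<Longrightarrow>
    cut_field d r T \<omega> i = A_apply d r (\<lambda>i'. if i' \<notin> T then delta_pair \<omega> i' else 0) (fst i) (snd i)"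
  unfolding cut_field_def A_apply_def sum_Times_eq_sum_sum A_pair_def by (intro sum.cong refl) auto

lemma sum_cut_field_sq_le:
  assumes "prime d" "odd d" "r \<le> d"
  shows "(\<Sum>i\<in>cells r d. cut_field d r T \<omega> i ^ 2) \<le> 16 * real d ^ 2 * (real r * real d)"
proof -
  define z where "z i' = (if i' \<notin> T then delta_pair \<omega> i' else 0)" for i'
  have "(\<Sum>i\<in>cells r d. cut_field d r T \<omega> i ^ 2) = (\<Sum>j<r. \<Sum>k<d. A_apply d r z j k ^ 2)"
    unfolding sum_Times_eq_sum_sum z_def by (intro sum.cong refl) (simp add: cut_field_eq_A_apply)
  also have "\<dots> \<le> 4 * real d ^ 2 * (\<Sum>j<r. \<Sum>k<d. z (j, k) ^ 2)" by (rule sum_A_apply_sq_le[OF assms])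
  also have "(\<Sum>j<r. \<Sum>k<d. z (j, k) ^ 2) \<le> (\<Sum>j<r. \<Sum>k<d. 4)"
    by (intro sum_mono) (simp add: z_def delta_pair_eq_sign_diff sign_diff_sq_le)
  finally show ?thesis by (simp add: mult_left_mono)
qed

lemma cut_field_set_coord:
  assumes "j \<in> T"
  shows "cut_field d r T (set_coord j x \<omega>) i = cut_field d r T \<omega> i"
  unfolding cut_field_def
proof (intro sum.cong refl)
  fix i'
  show "(if i' \<notin> T then A_pair d i i' * delta_pair (set_coord j x \<omega>) i' else 0) =
      (if i' \<notin> T then A_pair d i i' * delta_pair \<omega> i' else 0)"
    using assms by (cases "i' = j") (auto simp: delta_pair_eq_sign_diff)
qed

lemma sum_exp_cut_form_le:
  assumes "prime d" "odd d" "r \<le> d" "T \<subseteq> cells r d"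
  shows "(\<Sum>\<omega>\<in>sample_space r d. exp (- 4 * \<theta> * cut_form d r T \<omega>))
    \<le> real (card (sample_space r d)) * exp (256 * \<theta> ^ 2 * real d ^ 2 * (real r * real d))"
proof -
  have "finite T" using assms(4) finite_subset by blast
  define h where "h i \<omega> x = - (4 * \<theta> * cut_field d r T \<omega> i) * sign_diff x" for i \<omega> x
  define M where "M i \<omega> = (4 * \<theta> * cut_field d r T \<omega> i) ^ 2" for i \<omega>
  have "(\<Sum>\<omega>\<in>sample_space r d. exp (- 4 * \<theta> * cut_form d r T \<omega>)) =
      (\<Sum>\<omega>\<in>sample_space r d. exp ((\<lambda>_. 0) \<omega> + (\<Sum>i\<in>T. h i \<omega> (coord i \<omega>))))"
    unfolding cut_form_eq_sum_cut_field[OF assms(4)] h_def delta_pair_eq_sign_diff sum_distrib_left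
    by (simp add: mult_ac)
  also have "\<dots> \<le> (\<Sum>\<omega>\<in>sample_space r d. exp ((\<lambda>_. 0) \<omega> + (\<Sum>i\<in>T. M i \<omega>)))"
  proof (rule sum_exp_sum_coord_le[OF \<open>finite T\<close> assms(4)])
    fix i \<omega>
    show "(\<Sum>x\<in>UNIV. exp (h i \<omega> x)) / 4 \<le> exp (M i \<omega>)"
      unfolding h_def M_def by (rule mean_exp_sign_diff_le)
  qed (simp_all add: h_def M_def cut_field_set_coord)
  also have "\<dots> \<le> (\<Sum>\<omega>\<in>sample_space r d. exp (256 * \<theta> ^ 2 * real d ^ 2 * (real r * real d)))"
  proof (intro sum_mono)
    fix \<omega>
    have "(\<Sum>i\<in>T. M i \<omega>) = 16 * \<theta> ^ 2 * (\<Sum>i\<in>T. cut_field d r T \<omega> i ^ 2)"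
      unfolding M_def sum_distrib_left by (simp add: power_mult_distrib)
    also have "\<dots> \<le> 16 * \<theta> ^ 2 * (\<Sum>i\<in>cells r d. cut_field d r T \<omega> i ^ 2)"
      by (intro mult_left_mono sum_mono2 assms(4)) auto
    also have "\<dots> \<le> 16 * \<theta> ^ 2 * (16 * real d ^ 2 * (real r * real d))"
      by (intro mult_left_mono sum_cut_field_sq_le assms(1-3)) auto
    finally show "exp ((\<lambda>_. 0) \<omega> + (\<Sum>i\<in>T. M i \<omega>)) \<le> exp (256 * \<theta> ^ 2 * real d ^ 2 * (real r * real d))"
      by simp
  qed
  finally show ?thesis by simp
qed

text \<open>Every off-diagonal pair \<open>(i, i')\<close> is cut (\<open>i \<in> T\<close>, \<open>i' \<notin> T\<close>) by a quarter of all \<open>T\<close>,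
  so \<open>Q\<close> is four times the average cut form; then apply Jensen's inequality to \<open>exp\<close>.\<close>

lemma exp_offdiag_form_le_mean_cut:
  assumes "card (cells r d) \<ge> 2"
  shows "exp (- \<theta> * offdiag_form d r \<omega>) \<le>
    (\<Sum>T\<in>Pow (cells r d). (1 / 2 ^ card (cells r d)) * exp (- 4 * \<theta> * cut_form d r T \<omega>))"
proof -
  let ?I = "cells r d" and ?N = "card (cells r d)"
  have "(2::real) ^ ?N = 4 * 2 ^ (?N - 2)"
    using assms by (metis le_add_diff_inverse2 power_add power2_eq_square mult_2_right numeral_Bit0 mult.commute)
  moreover have "(\<Sum>T\<in>Pow ?I. cut_form d r T \<omega>) = 2 ^ (?N - 2) * offdiag_form d r \<omega>"
    unfolding cut_form_def offdiag_form_def by (rule sum_Pow_cut) simp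
  moreover have "(\<Sum>T\<in>Pow ?I. (1 / 2 ^ ?N) *\<^sub>R (- 4 * \<theta> * cut_form d r T \<omega>)) =
      (1 / 2 ^ ?N) * (- 4 * \<theta>) * (\<Sum>T\<in>Pow ?I. cut_form d r T \<omega>)"
    by (simp only: real_scaleR_def mult.assoc[symmetric] sum_distrib_left[symmetric])
  ultimately have mean: "(\<Sum>T\<in>Pow ?I. (1 / 2 ^ ?N) *\<^sub>R (- 4 * \<theta> * cut_form d r T \<omega>)) = - \<theta> * offdiag_form d r \<omega>"
    by (simp add: field_simps)
  have "convex_on UNIV exp" using convex_on_exp[of 1] by simp
  hence "exp (\<Sum>T\<in>Pow ?I. (1 / 2 ^ ?N) *\<^sub>R (- 4 * \<theta> * cut_form d r T \<omega>)) \<le>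
      (\<Sum>T\<in>Pow ?I. (1 / 2 ^ ?N) * exp (- 4 * \<theta> * cut_form d r T \<omega>))"
    by (intro convex_on_sum) (auto simp: card_Pow)
  thus ?thesis unfolding mean .
qed

section \<open>The tail bound\<close>

lemma finite_sample_space: "finite (sample_space r d)"
  by (intro finite_cartesian_product finite_PiE) auto

lemma sample_space_nonempty: "sample_space r d \<noteq> {}"
  by (simp add: PiE_eq_empty_iff)

lemma card_le_sum_of_ge_1:
  fixes F :: "'a \<Rightarrow> real"
  assumes "finite S" "\<And>\<omega>. \<omega> \<in> S \<Longrightarrow> \<omega> \<in> E \<Longrightarrow> 1 \<le> F \<omega>" "\<And>\<omega>. \<omega> \<in> S \<Longrightarrow> 0 \<le> F \<omega>"
  shows "real (card (S \<inter> E)) \<le> (\<Sum>\<omega>\<in>S. F \<omega>)"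
proof -
  have "real (card (S \<inter> E)) = (\<Sum>\<omega>\<in>S \<inter> E. 1)" by simp
  also have "\<dots> \<le> (\<Sum>\<omega>\<in>S \<inter> E. F \<omega>)" by (rule sum_mono) (use assms(2) in auto)
  also have "\<dots> \<le> (\<Sum>\<omega>\<in>S. F \<omega>)" by (rule sum_mono2) (use assms in auto)
  finally show ?thesis .
qed

lemma sum_exp_offdiag_form_le:
  assumes "prime d" "odd d" "1 \<le> r" "r \<le> d"
  shows "(\<Sum>\<omega>\<in>sample_space r d. exp (- \<theta> * offdiag_form d r \<omega>)) \<le>
    real (card (sample_space r d)) * exp (256 * \<theta> ^ 2 * real d ^ 2 * (real r * real d))"
proof -
  let ?I = "cells r d" and ?N = "card (cells r d)" and ?\<Omega> = "sample_space r d"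
  define K where "K = real (card ?\<Omega>) * exp (256 * \<theta> ^ 2 * real d ^ 2 * (real r * real d))"
  have "d \<ge> 2" using assms(1) prime_ge_2_nat by blast
  hence "?N \<ge> 2" using mult_le_mono[OF assms(3)] by (simp add: card_cartesian_product)
  hence "(\<Sum>\<omega>\<in>?\<Omega>. exp (- \<theta> * offdiag_form d r \<omega>)) \<le>
      (\<Sum>\<omega>\<in>?\<Omega>. \<Sum>T\<in>Pow ?I. (1 / 2 ^ ?N) * exp (- 4 * \<theta> * cut_form d r T \<omega>))"
    by (intro sum_mono exp_offdiag_form_le_mean_cut)
  also have "\<dots> = (\<Sum>T\<in>Pow ?I. (1 / 2 ^ ?N) * (\<Sum>\<omega>\<in>?\<Omega>. exp (- 4 * \<theta> * cut_form d r T \<omega>)))"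
    by (subst sum.swap) (simp add: sum_distrib_left)
  also have "\<dots> \<le> (\<Sum>T\<in>Pow ?I. (1 / 2 ^ ?N) * K)"
    unfolding K_def by (intro sum_mono mult_left_mono sum_exp_cut_form_le assms(1,2,4)) auto
  also have "\<dots> = K" by (simp add: card_Pow)
  finally show ?thesis unfolding K_def .
qed

lemma card_offdiag_form_small_le:
  assumes "prime d" "odd d" "1 \<le> r" "r \<le> d"
  shows "real (card (sample_space r d \<inter> {\<omega>. offdiag_form d r \<omega> \<le> - (real d ^ 2 * real r / 2)}))
    \<le> real (card (sample_space r d)) * exp (- (real r * real d) / 4096)"
proof -
  let ?\<Omega> = "sample_space r d"
  have d: "real d > 0" using assms(1) prime_gt_0_nat by simp
  define \<theta> :: real where "\<theta> = 1 / (1024 * real d)"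
  define t where "t = real d ^ 2 * real r / 2"
  have "\<theta> > 0" unfolding \<theta>_def using d by simp
  have "real (card (?\<Omega> \<inter> {\<omega>. offdiag_form d r \<omega> \<le> - t})) \<le> (\<Sum>\<omega>\<in>?\<Omega>. exp (- \<theta> * (offdiag_form d r \<omega> + t)))"
  proof (rule card_le_sum_of_ge_1[OF finite_sample_space])
    fix \<omega> assume "\<omega> \<in> {\<omega>. offdiag_form d r \<omega> \<le> - t}"
    hence "0 \<le> - \<theta> * (offdiag_form d r \<omega> + t)" using \<open>\<theta> > 0\<close> by (simp add: mult_nonneg_nonpos)
    thus "1 \<le> exp (- \<theta> * (offdiag_form d r \<omega> + t))" by simp
  qed simp
  also have "\<dots> = exp (- \<theta> * t) * (\<Sum>\<omega>\<in>?\<Omega>. exp (- \<theta> * offdiag_form d r \<omega>))"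
    by (simp add: sum_distrib_left exp_add[symmetric] algebra_simps)
  also have "\<dots> \<le> exp (- \<theta> * t) * (real (card ?\<Omega>) * exp (256 * \<theta> ^ 2 * real d ^ 2 * (real r * real d)))"
    by (intro mult_left_mono sum_exp_offdiag_form_le assms) simp
  also have "\<dots> = real (card ?\<Omega>) * exp (- \<theta> * t + 256 * \<theta> ^ 2 * real d ^ 2 * (real r * real d))"
    unfolding exp_add by (simp only: mult_ac)
  also have "- \<theta> * t + 256 * \<theta> ^ 2 * real d ^ 2 * (real r * real d) = - (real r * real d) / 4096"
    unfolding \<theta>_def t_def using d by (simp add: field_simps power2_eq_square)
  finally show ?thesis unfolding t_def .
qed

lemma mean_exp_sign_diff_sq_le: "(\<Sum>x\<in>UNIV. exp (- (1 / 8) * sign_diff x ^ 2)) / 4 \<le> 5 / 6"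
proof -
  have "(3 / 2 :: real) \<le> exp (1 / 2)" using exp_ge_add_one_self[of "1 / 2 :: real"] by simp
  hence "inverse (exp (1 / 2 :: real)) \<le> 2 / 3" using le_imp_inverse_le[of "3 / 2"] by fastforce
  thus ?thesis by (simp add: sum_UNIV_bool_pair_expand exp_minus)
qed

lemma ln_five_sixths_le: "ln (5 / 6) \<le> - 1 / 4096 - (1 / 8 :: real)"
proof -
  have "(1 - 1 / 4096) * (1 - 1 / 8) \<le> exp (- 1 / 4096 :: real) * exp (- 1 / 8)"
    using exp_ge_add_one_self[of "- 1 / 4096 :: real"] exp_ge_add_one_self[of "- 1 / 8 :: real"]
    by (intro mult_mono) auto
  hence "(5 / 6 :: real) \<le> exp (- 1 / 4096 - 1 / 8)" by (simp add: exp_add[symmetric])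
  thus ?thesis using ln_le_cancel_iff[of "5 / 6" "exp (- 1 / 4096 - 1 / 8)"] by simp
qed

text \<open>Chernoff: \<open>E exp (- \<delta>\<^sub>i\<^sup>2 / 8) \<le> 5/6\<close> for each of the \<open>rd\<close> independent coordinates.\<close>

lemma card_delta_pair_small_le:
  "real (card (sample_space r d \<inter> {\<omega>. (\<Sum>i\<in>cells r d. delta_pair \<omega> i ^ 2) \<le> real r * real d}))
    \<le> real (card (sample_space r d)) * exp (- (real r * real d) / 4096)"
proof -
  let ?I = "cells r d" and ?\<Omega> = "sample_space r d"
  define n where "n = real r * real d"
  have "real (card (?\<Omega> \<inter> {\<omega>. (\<Sum>i\<in>?I. delta_pair \<omega> i ^ 2) \<le> n})) \<le>
      (\<Sum>\<omega>\<in>?\<Omega>. exp (n / 8 - (1 / 8) * (\<Sum>i\<in>?I. delta_pair \<omega> i ^ 2)))"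
    by (rule card_le_sum_of_ge_1[OF finite_sample_space]) auto
  also have "\<dots> = (\<Sum>\<omega>\<in>?\<Omega>. exp ((\<lambda>_. n / 8) \<omega> + (\<Sum>i\<in>?I. (\<lambda>i \<omega> x. - (1 / 8) * sign_diff x ^ 2) i \<omega> (coord i \<omega>))))"
    unfolding delta_pair_eq_sign_diff sum_distrib_left by (simp add: sum_negf)
  also have "\<dots> \<le> (\<Sum>\<omega>\<in>?\<Omega>. exp ((\<lambda>_. n / 8) \<omega> + (\<Sum>i\<in>?I. (\<lambda>i \<omega>. ln (5 / 6)) i \<omega>)))"
  proof (rule sum_exp_sum_coord_le)
    fix i \<omega>
    show "(\<Sum>x\<in>UNIV. exp ((\<lambda>i \<omega> x. - (1 / 8) * sign_diff x ^ 2) i \<omega> x)) / 4 \<le> exp ((\<lambda>i \<omega>. ln (5 / 6)) i \<omega>)"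
      using mean_exp_sign_diff_sq_le by simp
  qed auto
  also have "\<dots> = real (card ?\<Omega>) * exp (n / 8 + n * ln (5 / 6))"
    by (simp add: card_cartesian_product n_def)
  also have "exp (n / 8 + n * ln (5 / 6)) \<le> exp (- n / 4096)"
    using mult_left_mono[OF ln_five_sixths_le, of n] by (simp add: n_def algebra_simps)
  finally show ?thesis unfolding n_def by (simp add: mult_left_mono)
qed

text \<open>Either \<open>|\<delta>|\<^sup>2 \<le> rd\<close>, or the diagonal part \<open>d|\<delta>|\<^sup>2\<close> exceeds \<open>d\<^sup>2r\<close> and the off-diagonal part
  must be \<open>\<le> -d\<^sup>2r/2\<close>.\<close>

lemma card_quad_form_small_le:
  assumes "prime d" "odd d" "1 \<le> r" "r \<le> d"
  shows "real (card (sample_space r d \<inter> {\<omega>. quad_form d r (delta_pair \<omega>) \<le> real d ^ 2 * real r / 2}))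
         \<le> 2 * real (card (sample_space r d)) * exp (- (real r * real d) / 4096)"
proof -
  let ?\<Omega> = "sample_space r d"
  let ?E1 = "{\<omega>. (\<Sum>i\<in>cells r d. delta_pair \<omega> i ^ 2) \<le> real r * real d}"
  let ?E2 = "{\<omega>. offdiag_form d r \<omega> \<le> - (real d ^ 2 * real r / 2)}"
  have d: "d > 0" using assms(1) prime_gt_0_nat by blast
  have "?\<Omega> \<inter> {\<omega>. quad_form d r (delta_pair \<omega>) \<le> real d ^ 2 * real r / 2} \<subseteq> (?\<Omega> \<inter> ?E1) \<union> (?\<Omega> \<inter> ?E2)"
  proof
    fix \<omega> assume \<omega>: "\<omega> \<in> ?\<Omega> \<inter> {\<omega>. quad_form d r (delta_pair \<omega>) \<le> real d ^ 2 * real r / 2}"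
    show "\<omega> \<in> (?\<Omega> \<inter> ?E1) \<union> (?\<Omega> \<inter> ?E2)"
    proof (cases "\<omega> \<in> ?E1")
      case False
      hence "real d * (real r * real d) \<le> real d * (\<Sum>i\<in>cells r d. delta_pair \<omega> i ^ 2)"
        by (intro mult_left_mono) auto
      moreover have "real d * (\<Sum>i\<in>cells r d. delta_pair \<omega> i ^ 2) + offdiag_form d r \<omega> \<le> real d ^ 2 * real r / 2"
        using \<omega> quad_form_eq_diag_plus_offdiag[OF d] by simp
      ultimately show ?thesis using \<omega> by (simp add: power2_eq_square algebra_simps)
    qed (use \<omega> in auto)
  qed
  hence "real (card (?\<Omega> \<inter> {\<omega>. quad_form d r (delta_pair \<omega>) \<le> real d ^ 2 * real r / 2}))
      \<le> real (card ((?\<Omega> \<inter> ?E1) \<union> (?\<Omega> \<inter> ?E2)))"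
    using finite_sample_space by (simp add: card_mono)
  also have "\<dots> \<le> real (card (?\<Omega> \<inter> ?E1)) + real (card (?\<Omega> \<inter> ?E2))"
    using card_Un_le[of "?\<Omega> \<inter> ?E1" "?\<Omega> \<inter> ?E2"] by linarith
  also have "\<dots> \<le> real (card ?\<Omega>) * exp (- (real r * real d) / 4096) +
      real (card ?\<Omega>) * exp (- (real r * real d) / 4096)"
    by (rule add_mono[OF card_delta_pair_small_le card_offdiag_form_small_le[OF assms]])
  also have "\<dots> = 2 * real (card ?\<Omega>) * exp (- (real r * real d) / 4096)"
    by (simp only: mult_2 distrib_right)
  finally show ?thesis .
qed

lemma bit_pairs_eq_pmf_of_set: "bit_pairs r d = pmf_of_set (sample_space r d)"
  unfolding bit_pairs_def bitstrings_def ..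

lemma case_prod_delta_of: "(\<lambda>(b, b'). f (delta_of b b')) = (\<lambda>\<omega>. f (delta_pair \<omega>))"
  by (simp add: delta_pair_def case_prod_beta')

lemma expectation_quad_form_delta:
  assumes "d > 0"
  shows "measure_pmf.expectation (bit_pairs r d) (\<lambda>(b, b'). quad_form d r (delta_of b b')) =
    2 * real d ^ 2 * real r"
proof -
  have "real (card (sample_space r d)) > 0"
    using finite_sample_space sample_space_nonempty by (simp add: card_gt_0_iff)
  thus ?thesis
    unfolding bit_pairs_eq_pmf_of_set case_prod_delta_of
      integral_pmf_of_set[OF sample_space_nonempty finite_sample_space] sum_quad_form_delta_pair[OF assms]
    by simp
qed

lemma prob_quad_form_delta_small_le:
  assumes "prime d" "odd d" "1 \<le> r" "r \<le> d"
  shows "measure_pmf.prob (bit_pairs r d) {(b, b'). quad_form d r (delta_of b b') \<le> real d ^ 2 * real r / 2}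
    \<le> 2 * exp (- (1 / 4096) * real r * real d)"
proof -
  let ?\<Omega> = "sample_space r d"
  have "{(b, b'). quad_form d r (delta_of b b') \<le> real d ^ 2 * real r / 2} =
      {\<omega>. quad_form d r (delta_pair \<omega>) \<le> real d ^ 2 * real r / 2}"
    by (auto simp: delta_pair_def)
  hence "measure_pmf.prob (bit_pairs r d) {(b, b'). quad_form d r (delta_of b b') \<le> real d ^ 2 * real r / 2} =
      real (card (?\<Omega> \<inter> {\<omega>. quad_form d r (delta_pair \<omega>) \<le> real d ^ 2 * real r / 2})) / real (card ?\<Omega>)"
    unfolding bit_pairs_eq_pmf_of_set measure_pmf_of_set[OF sample_space_nonempty finite_sample_space] by simp
  also have "\<dots> \<le> 2 * real (card ?\<Omega>) * exp (- (real r * real d) / 4096) / real (card ?\<Omega>)"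
    by (intro divide_right_mono card_quad_form_small_le assms) simp
  also have "\<dots> = 2 * exp (- (1 / 4096) * real r * real d)"
    using finite_sample_space sample_space_nonempty by (simp add: card_gt_0_iff)
  finally show ?thesis .
qed

theorem mainTheorem19:
  shows "(\<forall>d r. prime d \<and> odd d \<and> 1 \<le> r \<and> r \<le> d \<longrightarrow>
            measure_pmf.expectation (bit_pairs r d)
              (\<lambda>(b, b'). quad_form d r (delta_of b b')) = 2 * real d ^ 2 * real r)
       \<and> (\<exists>c C. c > 0 \<and> C > 0 \<and>
            (\<forall>d r. prime d \<and> odd d \<and> 1 \<le> r \<and> r \<le> d \<longrightarrow>
               measure_pmf.prob (bit_pairs r d)
                 {(b, b'). quad_form d r (delta_of b b') \<le> real d ^ 2 * real r / 2}
               \<le> C * exp (- c * real r * real d)))"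
proof
  show "\<forall>d r. prime d \<and> odd d \<and> 1 \<le> r \<and> r \<le> d \<longrightarrow>
      measure_pmf.expectation (bit_pairs r d) (\<lambda>(b, b'). quad_form d r (delta_of b b')) = 2 * real d ^ 2 * real r"
    by (simp add: expectation_quad_form_delta prime_gt_0_nat)
  show "\<exists>c C. c > 0 \<and> C > 0 \<and> (\<forall>d r. prime d \<and> odd d \<and> 1 \<le> r \<and> r \<le> d \<longrightarrow>
      measure_pmf.prob (bit_pairs r d) {(b, b'). quad_form d r (delta_of b b') \<le> real d ^ 2 * real r / 2}
        \<le> C * exp (- c * real r * real d))"
  proof (rule exI[of _ "1 / 4096"], rule exI[of _ 2], intro conjI allI impI)
    fix d r :: nat assume "prime d \<and> odd d \<and> 1 \<le> r \<and> r \<le> d"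
    thus "measure_pmf.prob (bit_pairs r d) {(b, b'). quad_form d r (delta_of b b') \<le> real d ^ 2 * real r / 2}
      \<le> 2 * exp (- (1 / 4096) * real r * real d)"
      by (intro prob_quad_form_delta_small_le) auto
  qed simp_all
qed

end
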